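(* Let $x$ be a real number with $x>(1+\sqrt2)/2$ or $x<(1-\sqrt2)/2$. Then $$\sum_{k=0}^\infty\frac{(2(2x-1)^2(2x-3)k-(4x^3-16x^2+7x+6))4^k}{(x(1-x))^k\binom{4k}{2k}}=(1-x)\left(3R(x)+4x(x-3)\right)$$ and $$\sum_{k=0}^\infty\frac{(2(2x-1)^2(2x+1)k-(4x^3+4x^2-13x-1))4^k}{(x(1-x))^k\binom{4k}{2k}}=-x\left(3R(1-x)+4(x-1)(x+2)\right).$$
   Context: For real $y$ with $y>1$ or $y<0$, define $R(y)=\sqrt y\,\operatorname{arctanh}\frac1{\sqrt y}$, i.e. $R(y)=\frac{\sqrt y}2\log\frac{\sqrt y+1}{\sqrt y-1}$ if $y>1$ and $R(y)=\sqrt{|y|}\arctan\frac1{\sqrt{|y|}}$ if $y<0$. *)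

theory Defs
  imports "HOL-Analysis.Analysis"
begin

text \<open>R(y) = sqrt y * arctanh(1/sqrt y), for y > 1 or y < 0 (real-valued branch).
  Outside this domain the value is irrelevant; we set it to 0.\<close>
definition R :: "real \<Rightarrow> real" where
  "R y = (if y > 1 then sqrt y / 2 * ln ((sqrt y + 1) / (sqrt y - 1))
          else if y < 0 then sqrt \<bar>y\<bar> * arctan (1 / sqrt \<bar>y\<bar>)
          else 0)"

end

theory Submission
  imports Defs
begin

text \<open>
  By Wallis' integral, 4^k / (t^k binom(4k, 2k)) = (4k+1) \<integral> q(y)^k dy over [0,1], where t = x(1-x)
  and q(y) = (1-y^2)^2 / (4t). The hypothesis says 4t < -1, so |q| \<le> 1/|4t| < 1 on [0,1] and the
  series can be summed under the integral: the sum of (Ak+B)(4k+1) q^k is a rational function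
  of y in closed form. Hermite reduction splits it into the derivative of an explicit rational
  function plus 3(1-x) times 2x(2x-1-y^2) / (y^4-2y^2+(2x-1)^2), whose integral over [0,1] is R(x)
  (a logarithm for x > 1, an arctangent for x < 0). The second identity is the first one at
  1 - x, with the sign reversed.
\<close>

lemma fundamental_theorem_of_calculus_real:
  fixes f f' :: "real \<Rightarrow> real"
  assumes "a \<le> b" "\<And>y. y \<in> {a..b} \<Longrightarrow> (f has_real_derivative f' y) (at y)"
  shows "(f' has_integral (f b - f a)) {a..b}"
  using assms by (intro fundamental_theorem_of_calculus)
    (auto simp: has_real_derivative_iff_has_vector_derivative has_vector_derivative_at_within)

lemma central_binomial_Suc:
  "(Suc (Suc (2*n)) choose Suc n) * Suc n = 2 * Suc (2*n) * ((2*n) choose n)"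
proof -
  have "(Suc (Suc (2*n)) choose Suc n) * Suc n = Suc (Suc (2*n)) * (Suc (2*n) choose n)"
    by (rule Suc_times_binomial_eq[symmetric])
  also have "Suc (2*n) choose n = Suc (2*n) choose Suc n"
    using binomial_symmetric[of n "Suc (2*n)"] by simp
  also have "Suc (Suc (2*n)) * (Suc (2*n) choose Suc n) = 2 * ((Suc (2*n) choose Suc n) * Suc n)"
    by simp
  also have "(Suc (2*n) choose Suc n) * Suc n = Suc (2*n) * ((2*n) choose n)"
    by (rule Suc_times_binomial_eq[symmetric])
  finally show ?thesis by simp
qed

lemma has_integral_one_minus_square_power:
  "((\<lambda>y::real. (1 - y^2)^n) has_integral 4^n / ((2*n+1) * ((2*n) choose n))) {0..1}"
proof (induction n)
  case 0
  show ?case using has_integral_const_real[of "1::real" 0 1] by simp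
next
  case (Suc n)
  have "((\<lambda>y::real. (2*n+3) * (1-y^2)^(n+1) - (2*n+2) * (1-y^2)^n) has_integral
      1 * (1 - 1^2)^(n+1) - 0 * (1 - 0^2)^(n+1)) {0..1}"
    by (rule fundamental_theorem_of_calculus_real[where f = "\<lambda>y. y * (1-y^2)^(n+1)"])
      ((rule derivative_eq_intros refl | simp)+, simp add: algebra_simps power2_eq_square)
  from has_integral_add[OF this has_integral_mult_right[OF Suc.IH, of "2*n+2"]]
  have "((\<lambda>y::real. (2*n+3) * (1-y^2)^(n+1)) has_integral
      (2*n+2) * (4^n / ((2*n+1) * ((2*n) choose n)))) {0..1}"
    by simp
  then have "((\<lambda>y::real. (1-y^2)^(n+1)) has_integral
      (2*n+2) * (4^n / ((2*n+1) * ((2*n) choose n))) / (2*n+3)) {0..1}"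
    by (subst (asm) has_integral_mult_right_iff) auto
  moreover have "(2*n+2) * (4^n / ((2*n+1) * ((2*n) choose n))) / (2*n+3)
      = (4 ^ Suc n / real ((2 * Suc n + 1) * ((2 * Suc n) choose Suc n)) :: real)"
  proof -
    define c where "c = real ((2*n) choose n)"
    have "c > 0" by (simp add: c_def)
    define d where "d = real ((2 * Suc n) choose Suc n)"
    have d: "d = 2 * (2*n+1) * c / (n+1)"
      using arg_cong[OF central_binomial_Suc[of n], of real]
      by (simp add: c_def d_def field_simps del: binomial_Suc_Suc)
    show ?thesis
      unfolding of_nat_mult c_def[symmetric] d_def[symmetric] d
      using \<open>c > 0\<close> by (simp add: field_split_simps)
  qed
  ultimately show ?case by simp
qed

lemma has_integral_inverse_central_binomial:
  fixes t :: real
  shows "((\<lambda>y. (4*k+1) * ((1 - y^2)^2 / (4*t))^k) has_integral 4^k / (t^k * ((4*k) choose (2*k)))) {0..1}"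
proof -
  define a c where "a = real (4*k+1)" and "c = real ((4*k) choose (2*k))"
  have "a > 0" by (simp add: a_def)
  have "(4::real)^(2*k) = 4^k * 4^k" "2*(2*k) = 4*k"
    by (metis mult_2 power_add) simp
  with has_integral_one_minus_square_power[of "2*k"]
  have "((\<lambda>y. (1 - y^2)^(2*k)) has_integral (4^k * 4^k) / (a * c)) {0..1}"
    unfolding a_def c_def of_nat_mult by simp
  from has_integral_mult_right[OF this, of "a / (4^k * t^k)"]
  have "((\<lambda>y. a / (4^k * t^k) * (1 - y^2)^(2*k)) has_integral a / (4^k * t^k) * ((4^k * 4^k) / (a * c))) {0..1}" .
  moreover have "a / (4^k * t^k) * (1 - y^2)^(2*k) = (4*k+1) * ((1 - y^2)^2 / (4*t))^k" for y :: real
    by (simp add: a_def power_divide power_mult power_mult_distrib)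
  moreover have "a / (4^k * t^k) * ((4^k * 4^k) / (a * c)) = 4^k / (t^k * c)"
    using \<open>a > 0\<close> by simp
  ultimately show ?thesis by (simp add: c_def add.commute)
qed

lemma sums_integral_M_test:
  fixes f :: "nat \<Rightarrow> real \<Rightarrow> 'a::banach"
  assumes cont: "\<And>k. continuous_on {a..b} (f k)"
    and bound: "\<And>k y. y \<in> {a..b} \<Longrightarrow> norm (f k y) \<le> M k" and "summable M"
    and terms: "\<And>k. (f k has_integral I k) {a..b}"
    and limit: "\<And>y. y \<in> {a..b} \<Longrightarrow> (\<lambda>k. f k y) sums F y"
    and "(F has_integral J) {a..b}"
  shows "I sums J"
proof -
  have "uniform_limit {a..b} (\<lambda>n y. \<Sum>k<n. f k y) (\<lambda>y. \<Sum>k. f k y) sequentially"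
    using bound \<open>summable M\<close> by (rule Weierstrass_m_test)
  also have "?this \<longleftrightarrow> uniform_limit {a..b} (\<lambda>n y. \<Sum>k<n. f k y) F sequentially"
    using limit by (intro uniform_limit_cong') (auto simp: sums_iff)
  finally obtain I' J' where partial: "\<And>n. ((\<lambda>y. \<Sum>k<n. f k y) has_integral I' n) {a..b}"
    and "(F has_integral J') {a..b}" and "I' \<longlonglongrightarrow> J'"
    by (rule uniform_limit_integral) (auto intro!: continuous_on_sum cont)
  moreover have "I' = (\<lambda>n. \<Sum>k<n. I k)"
  proof
    show "I' n = (\<Sum>k<n. I k)" for n
      using has_integral_unique[OF partial has_integral_sum[of "{..<n}" f I]] terms by simp
  qed
  moreover have "J' = J"
    using \<open>(F has_integral J) {a..b}\<close> \<open>(F has_integral J') {a..b}\<close> by (rule has_integral_unique[symmetric])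
  ultimately show ?thesis
    by (simp add: sums_def)
qed

definition quadratic_geometric_sum :: "real \<Rightarrow> real \<Rightarrow> real \<Rightarrow> real \<Rightarrow> real" where
  "quadratic_geometric_sum a b c q = (a*q*(1+q) + b*q*(1-q) + c*(1-q)^2) / (1-q)^3"

lemma quadratic_geometric_sum_linear:
  "quadratic_geometric_sum a b c q =
     a * quadratic_geometric_sum 1 0 0 q + b * quadratic_geometric_sum 0 1 0 q + c * quadratic_geometric_sum 0 0 1 q"
  by (cases "q = 1") (simp_all add: quadratic_geometric_sum_def field_simps)

lemma quadratic_geometric_sum_shift:
  assumes "q \<noteq> 1"
  shows "quadratic_geometric_sum a b c q - q * quadratic_geometric_sum a (b + 2*a) (a + b + c) q = c"
proof -
  define d where "d = 1 - q"
  have "d \<noteq> 0" "q = 1 - d" using assms by (auto simp: d_def)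
  then show ?thesis
    unfolding quadratic_geometric_sum_def \<open>q = 1 - d\<close>
    by (simp add: field_simps power2_eq_square power3_eq_cube)
qed

lemma sum_quadratic_geometric:
  assumes "q \<noteq> 1"
  shows "(\<Sum>k<n. (a * real k^2 + b * real k + c) * q^k) = quadratic_geometric_sum a b c q
     - q^n * quadratic_geometric_sum a (b + 2 * real n * a) (a * real n^2 + b * real n + c) q"
proof (induction n)
  case (Suc n)
  have "b + 2 * real (Suc n) * a = (b + 2 * real n * a) + 2 * a"
    and "a * real (Suc n)^2 + b * real (Suc n) + c = a + (b + 2 * real n * a) + (a * real n^2 + b * real n + c)"
    by (simp_all add: algebra_simps power2_eq_square)
  with Suc.IH quadratic_geometric_sum_shift[OF assms, of a "b + 2 * real n * a" "a * real n^2 + b * real n + c"]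
  show ?case by (simp add: algebra_simps)
qed simp

lemma abs_quadratic_times_power_le:
  fixes q :: real
  shows "\<bar>(a * real n^2 + b * real n + c) * q^n\<bar> \<le> (\<bar>a\<bar> * real n^2 + \<bar>b\<bar> * real n + \<bar>c\<bar>) * \<bar>q\<bar>^n"
proof -
  have "\<bar>a * real n^2 + b * real n + c\<bar> \<le> \<bar>a\<bar> * real n^2 + \<bar>b\<bar> * real n + \<bar>c\<bar>"
    using abs_triangle_ineq[of "a * real n^2 + b * real n" c] abs_triangle_ineq[of "a * real n^2" "b * real n"]
    by (simp add: abs_mult)
  then show ?thesis
    unfolding abs_mult power_abs by (rule mult_right_mono) simp
qed

lemma quadratic_times_power_tendsto_zero:
  fixes q :: real
  assumes "\<bar>q\<bar> < 1"
  shows "(\<lambda>n. (a * real n^2 + b * real n + c) * q^n) \<longlonglongrightarrow> 0"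
proof (rule Lim_null_comparison[OF always_eventually])
  define \<rho> where "\<rho> = sqrt \<bar>q\<bar>"
  have "\<bar>\<rho>\<bar> < 1" using assms by (simp add: \<rho>_def)
  have \<rho>_power: "\<bar>q\<bar> ^ n = \<rho>^n * \<rho>^n" for n
    by (simp add: \<rho>_def power_mult_distrib[symmetric])
  have "(\<lambda>n. \<bar>a\<bar> * ((real n * \<rho>^n) * (real n * \<rho>^n)) + \<bar>b\<bar> * (real n * \<bar>q\<bar>^n) + \<bar>c\<bar> * \<bar>q\<bar>^n)
      \<longlonglongrightarrow> \<bar>a\<bar> * (0 * 0) + \<bar>b\<bar> * 0 + \<bar>c\<bar> * 0"
    using assms \<open>\<bar>\<rho>\<bar> < 1\<close>
    by (intro tendsto_intros powser_times_n_limit_0 LIMSEQ_power_zero) simp_all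
  then show "(\<lambda>n. (\<bar>a\<bar> * real n^2 + \<bar>b\<bar> * real n + \<bar>c\<bar>) * \<bar>q\<bar>^n) \<longlonglongrightarrow> 0"
    by (simp add: \<rho>_power algebra_simps power2_eq_square)
  show "\<forall>n. norm ((a * real n^2 + b * real n + c) * q^n) \<le> (\<bar>a\<bar> * real n^2 + \<bar>b\<bar> * real n + \<bar>c\<bar>) * \<bar>q\<bar>^n"
    using abs_quadratic_times_power_le by simp
qed

lemma sums_quadratic_geometric:
  fixes q :: real
  assumes "\<bar>q\<bar> < 1"
  shows "(\<lambda>k. (a * real k^2 + b * real k + c) * q^k) sums quadratic_geometric_sum a b c q"
proof -
  define g where "g a' b' c' = quadratic_geometric_sum a' b' c' q" for a' b' c'
  have tail: "q^n * g a (b + 2 * real n * a) (a * real n^2 + b * real n + c) =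
      (a * g 0 0 1 * real n^2 + (2 * a * g 0 1 0 + b * g 0 0 1) * real n
        + (a * g 1 0 0 + b * g 0 1 0 + c * g 0 0 1)) * q^n" for n
    unfolding g_def by (subst quadratic_geometric_sum_linear) (simp add: algebra_simps)
  have "(\<lambda>n. q^n * g a (b + 2 * real n * a) (a * real n^2 + b * real n + c)) \<longlonglongrightarrow> 0"
    unfolding tail using assms by (rule quadratic_times_power_tendsto_zero)
  then have "(\<lambda>n. g a b c - q^n * g a (b + 2 * real n * a) (a * real n^2 + b * real n + c)) \<longlonglongrightarrow> g a b c - 0"
    by (intro tendsto_diff tendsto_const)
  moreover have "q \<noteq> 1" using assms by auto
  ultimately show ?thesis
    unfolding sums_def g_def by (simp add: sum_quadratic_geometric)
qed

lemma summable_abs_quadratic_geometric: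
  fixes q :: real
  assumes "\<bar>q\<bar> < 1"
  shows "summable (\<lambda>k. \<bar>(a * real k^2 + b * real k + c) * q^k\<bar>)"
proof (rule summable_comparison_test)
  show "summable (\<lambda>k. (\<bar>a\<bar> * real k^2 + \<bar>b\<bar> * real k + \<bar>c\<bar>) * \<bar>q\<bar>^k)"
    using sums_quadratic_geometric[of "\<bar>q\<bar>"] assms by (auto intro: sums_summable)
  show "\<exists>N. \<forall>k\<ge>N. norm \<bar>(a * real k^2 + b * real k + c) * q^k\<bar> \<le> (\<bar>a\<bar> * real k^2 + \<bar>b\<bar> * real k + \<bar>c\<bar>) * \<bar>q\<bar>^k"
    using abs_quadratic_times_power_le by auto
qed

lemma quadratic_geometric_sum_divide:
  assumes "T \<noteq> 0" "T \<noteq> S"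
  shows "quadratic_geometric_sum a b c (S / T) = T * (a*S*(T+S) + b*S*(T-S) + c*(T-S)^2) / (T-S)^3"
proof -
  obtain d where d: "T - S = d" "d \<noteq> 0" using assms(2) by simp
  have plus: "1 + S / T = (T + S) / T" and minus: "1 - S / T = d / T"
    using assms(1) d(1) by (simp_all add: field_simps)
  show ?thesis
    unfolding quadratic_geometric_sum_def plus minus d(1) using assms(1) d(2)
    by (simp add: field_simps power2_eq_square power3_eq_cube)
qed


definition R_integrand :: "real \<Rightarrow> real \<Rightarrow> real" where
  "R_integrand x y = 2*x*(2*x-1-y^2) / (y^4 - 2*y^2 + (2*x-1)^2)"

lemma has_integral_R_gt_one:
  assumes "x > 1"
  shows "(R_integrand x has_integral R x) {0..1}"
proof -
  define s where "s = sqrt x"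
  have "s > 1" and x: "x = s^2" using assms by (auto simp: s_def)
  have pos: "0 < (y + c)^2 + x - 1" for y c :: real
    using assms zero_le_power2[of "y + c"] by linarith
  define G where "G y = s/2 * (ln ((y + s)^2 + x - 1) - ln ((y - s)^2 + x - 1))" for y
  have "(G has_real_derivative R_integrand x y) (at y)" for y
  proof -
    have "(G has_real_derivative s/2 * (2*(y + s) / ((y + s)^2 + x - 1) - 2*(y - s) / ((y - s)^2 + x - 1))) (at y)"
      unfolding G_def using pos[of y s] pos[of y "-s"] by (auto intro!: derivative_eq_intros)
    moreover have "s/2 * (2*(y + s) / ((y + s)^2 + x - 1) - 2*(y - s) / ((y - s)^2 + x - 1))
        = R_integrand x y"
    proof -
      define P M where "P = (y + s)^2 + x - 1" and "M = (y - s)^2 + x - 1"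
      have "P > 0" "M > 0" using pos[of y s] pos[of y "-s"] by (simp_all add: P_def M_def)
      then have "s/2 * (2*(y + s) / P - 2*(y - s) / M) = s * ((y + s) * M - (y - s) * P) / (P * M)"
        by (simp add: field_simps)
      also have "s * ((y + s) * M - (y - s) * P) = 2*x*(2*x-1-y^2)"
        unfolding P_def M_def x by algebra
      also have "P * M = y^4 - 2*y^2 + (2*x-1)^2"
        unfolding P_def M_def x by algebra
      finally show ?thesis
        unfolding P_def M_def R_integrand_def .
    qed
    ultimately show ?thesis by (rule DERIV_cong)
  qed
  then have "(R_integrand x has_integral G 1 - G 0) {0..1}"
    by (intro fundamental_theorem_of_calculus_real) auto
  moreover have "G 1 - G 0 = R x"
  proof -
    have "(1 + s)^2 + x - 1 = 2 * s * (s + 1)" "(1 - s)^2 + x - 1 = 2 * s * (s - 1)"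
      unfolding x by algebra+
    then have "G 1 = s/2 * ln ((s + 1) / (s - 1))"
      using \<open>s > 1\<close> by (simp add: G_def ln_div ln_mult)
    then show ?thesis using assms by (simp add: G_def R_def s_def)
  qed
  ultimately show ?thesis by simp
qed

lemma has_integral_R_neg:
  assumes "x < 0"
  shows "(R_integrand x has_integral R x) {0..1}"
proof -
  define m where "m = sqrt (-x)"
  have "m > 0" and x: "x = - (m^2)" using assms by (auto simp: m_def)
  have pos: "0 < 2*m^2 + 1 - y^2" if "y \<in> {0..1}" for y
  proof -
    have "y^2 \<le> 1" "0 < m^2" using that \<open>m > 0\<close> power_le_one[of y 2] by auto
    then show ?thesis by linarith
  qed
  define G where "G y = m * arctan (2*m*y / (2*m^2 + 1 - y^2))" for y
  have "(G has_real_derivative R_integrand x y) (at y)" if "y \<in> {0..1}" for y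
  proof -
    have "(G has_real_derivative m * (inverse (1 + (2*m*y / (2*m^2 + 1 - y^2))^2)
        * ((2*m*(2*m^2 + 1 - y^2) + 2*m*y*(2*y)) / (2*m^2 + 1 - y^2)^2))) (at y)"
      unfolding G_def using pos[OF that]
      by (auto intro!: derivative_eq_intros simp: power2_eq_square)
    moreover have "m * (inverse (1 + (2*m*y / (2*m^2 + 1 - y^2))^2)
        * ((2*m*(2*m^2 + 1 - y^2) + 2*m*y*(2*y)) / (2*m^2 + 1 - y^2)^2))
        = R_integrand x y"
    proof -
      define c where "c = 2*m^2 + 1 - y^2"
      have "c > 0" "c^2 + (2*m*y)^2 > 0"
        using pos[OF that] by (simp_all add: c_def add_pos_nonneg)
      then have "inverse (1 + (2*m*y / c)^2) = c^2 / (c^2 + (2*m*y)^2)"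
        by (simp add: field_simps inverse_eq_divide)
      with \<open>c > 0\<close> have "m * (inverse (1 + (2*m*y / c)^2) * ((2*m*c + 2*m*y*(2*y)) / c^2))
          = m * (2*m*c + 2*m*y*(2*y)) / (c^2 + (2*m*y)^2)"
        by simp
      also have "m * (2*m*c + 2*m*y*(2*y)) = 2*x*(2*x-1-y^2)"
        unfolding c_def x by algebra
      also have "c^2 + (2*m*y)^2 = y^4 - 2*y^2 + (2*x-1)^2"
        unfolding c_def x by algebra
      finally show ?thesis
        unfolding c_def R_integrand_def .
    qed
    ultimately show ?thesis by (rule DERIV_cong)
  qed
  then have "(R_integrand x has_integral G 1 - G 0) {0..1}"
    by (intro fundamental_theorem_of_calculus_real) auto
  moreover have "G 1 - G 0 = R x"
  proof -
    have "2 * m * 1 / (2*m^2 + 1 - 1^2) = 1 / m"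
      using \<open>m > 0\<close> by (simp add: power2_eq_square)
    moreover have "R x = m * arctan (1 / m)"
      using assms by (simp add: R_def m_def)
    ultimately show ?thesis by (simp add: G_def)
  qed
  ultimately show ?thesis by simp
qed

lemma has_integral_R:
  assumes "x*(1-x) < 0"
  shows "(R_integrand x has_integral R x) {0..1}"
proof -
  have "x > 1 \<or> x < 0"
  proof (rule ccontr)
    assume "\<not> (x > 1 \<or> x < 0)"
    then have "0 \<le> x*(1-x)" by (simp add: not_less)
    with assms show False by simp
  qed
  then show ?thesis using has_integral_R_gt_one has_integral_R_neg by blast
qed

definition hermite_rational_part :: "real \<Rightarrow> real \<Rightarrow> real" where
  "hermite_rational_part x y = 2*x*y *
     (  (32*x^5 - 160*x^4 + 296*x^3 - 276*x^2 + 108*x + 3)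
      - (112*x^3 - 292*x^2 + 180*x + 9) * y^2
      + (40*x^3 - 112*x^2 + 72*x + 9) * y^4 - 3 * y^6)
     / (y^4 - 2*y^2 + (2*x-1)^2)^2"

lemma hermite_rational_part_0_1:
  assumes "x*(1-x) \<noteq> 0"
  shows "hermite_rational_part x 1 - hermite_rational_part x 0 = 4*x*(x-3)"
proof -
  have "hermite_rational_part x 1 = 4*x*(x-3) * (4*(x*(1-x)))^2 / (4*(x*(1-x)))^2"
    unfolding hermite_rational_part_def power_one mult_1_right by (rule arg_cong2[where f = "(/)"]; algebra)
  with assms show ?thesis by (simp add: hermite_rational_part_def)
qed

lemma hermite_reduction:
  fixes x y :: real
  defines "A \<equiv> 2*(2*x-1)^2*(2*x-3)" and "B \<equiv> -(4*x^3-16*x^2+7*x+6)"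
  assumes "x*(1-x) < 0"
  shows "((\<lambda>y. (1-x) * hermite_rational_part x y) has_real_derivative
      quadratic_geometric_sum (4*A) (A+4*B) B ((1-y^2)^2 / (4*(x*(1-x)))) - 3*(1-x) * R_integrand x y) (at y)"
proof -
  define D where "D y = y^4 - 2*y^2 + (2*x-1)^2" for y
  define N where "N y = 2*x*y *
     (  (32*x^5 - 160*x^4 + 296*x^3 - 276*x^2 + 108*x + 3)
      - (112*x^3 - 292*x^2 + 180*x + 9) * y^2
      + (40*x^3 - 112*x^2 + 72*x + 9) * y^4 - 3 * y^6)" for y
  define N' where "N' = 2*x *
     (  (32*x^5 - 160*x^4 + 296*x^3 - 276*x^2 + 108*x + 3)
      - 3 * (112*x^3 - 292*x^2 + 180*x + 9) * y^2
      + 5 * (40*x^3 - 112*x^2 + 72*x + 9) * y^4 - 21 * y^6)"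
  define D' where "D' = 4*y^3 - 4*y"
  define T S where "T = 4*(x*(1-x))" and "S = (1-y^2)^2"
  define E where "E = (1-x) * (N' * D y - 2 * N y * D') / D y ^ 3"
  have "T - S = - D y" unfolding D_def S_def T_def by algebra
  moreover have "S \<ge> 0" "T < 0" using assms(3) by (simp_all add: S_def T_def)
  ultimately have "D y > 0" by simp
  have "(N has_real_derivative N') (at y)"
    unfolding N_def N'_def by (auto intro!: derivative_eq_intros simp: algebra_simps eval_nat_numeral)
  moreover have "(D has_real_derivative D') (at y)"
    unfolding D_def D'_def by (auto intro!: derivative_eq_intros simp: algebra_simps eval_nat_numeral)
  ultimately have "((\<lambda>y. (1-x) * (N y / D y ^ 2)) has_real_derivative E) (at y)"
    using \<open>D y > 0\<close> unfolding E_def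
    by (auto intro!: derivative_eq_intros simp: field_simps power2_eq_square power3_eq_cube)
  moreover have "hermite_rational_part x = (\<lambda>y. N y / D y ^ 2)"
    by (simp add: fun_eq_iff hermite_rational_part_def N_def D_def)
  moreover have "quadratic_geometric_sum (4*A) (A+4*B) B (S / T) = E + 3*(1-x) * R_integrand x y"
  proof -
    have "quadratic_geometric_sum (4*A) (A+4*B) B (S / T)
        = T * (4*A*S*(T+S) + (A+4*B)*S*(T-S) + B*(T-S)^2) / (T-S)^3"
      using \<open>T < 0\<close> \<open>T - S = - D y\<close> \<open>D y > 0\<close> by (intro quadratic_geometric_sum_divide) auto
    also have "T * (4*A*S*(T+S) + (A+4*B)*S*(T-S) + B*(T-S)^2)
        = - ((1-x) * (N' * D y - 2 * N y * D') + 3*(1-x) * (2*x*(2*x-1-y^2)) * D y^2)"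
      unfolding A_def B_def N_def N'_def D_def D'_def T_def S_def by algebra
    also have "(T-S)^3 = - (D y^3)"
      unfolding \<open>T - S = - D y\<close> by simp
    also have "- ((1-x) * (N' * D y - 2 * N y * D') + 3*(1-x) * (2*x*(2*x-1-y^2)) * D y^2) / - (D y^3)
        = E + 3*(1-x) * R_integrand x y"
      using \<open>D y > 0\<close> unfolding E_def R_integrand_def D_def[symmetric] by (simp add: field_simps) algebra
    finally show ?thesis .
  qed
  ultimately show ?thesis
    unfolding S_def T_def by simp
qed

lemma has_integral_quadratic_geometric_sum:
  fixes x :: real
  defines "A \<equiv> 2*(2*x-1)^2*(2*x-3)" and "B \<equiv> -(4*x^3-16*x^2+7*x+6)"
  assumes "x*(1-x) < 0"
  shows "((\<lambda>y. quadratic_geometric_sum (4*A) (A+4*B) B ((1-y^2)^2 / (4*(x*(1-x)))))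
     has_integral (1-x) * (3 * R x + 4*x*(x-3))) {0..1}"
proof -
  have "((\<lambda>y. quadratic_geometric_sum (4*A) (A+4*B) B ((1-y^2)^2 / (4*(x*(1-x)))) - 3*(1-x) * R_integrand x y)
      has_integral (1-x) * hermite_rational_part x 1 - (1-x) * hermite_rational_part x 0) {0..1}"
    using hermite_reduction[OF assms(3)] unfolding A_def B_def
    by (intro fundamental_theorem_of_calculus_real) simp_all
  moreover have "(1-x) * hermite_rational_part x 1 - (1-x) * hermite_rational_part x 0 = (1-x) * (4*x*(x-3))"
    using hermite_rational_part_0_1[of x] assms(3) by (metis less_irrefl right_diff_distrib)
  ultimately have "((\<lambda>y. quadratic_geometric_sum (4*A) (A+4*B) B ((1-y^2)^2 / (4*(x*(1-x)))) - 3*(1-x) * R_integrand x y)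
      has_integral (1-x) * (4*x*(x-3))) {0..1}"
    by simp
  from has_integral_add[OF this has_integral_mult_right[OF has_integral_R[OF assms(3)], of "3*(1-x)"]]
  show ?thesis by (simp add: algebra_simps)
qed

lemma sums_R_series:
  fixes x :: real
  assumes "4*x*(1-x) < -1"
  shows "(\<lambda>k. ((2 * (2*x - 1)^2 * (2*x - 3) * real k - (4*x^3 - 16*x^2 + 7*x + 6)) * 4^k)
            / ((x * (1 - x))^k * real ((4*k) choose (2*k))))
     sums ((1 - x) * (3 * R x + 4 * x * (x - 3)))"
proof -
  define A B where "A = 2*(2*x-1)^2*(2*x-3)" and "B = -(4*x^3-16*x^2+7*x+6)"
  define t where "t = x*(1-x)"
  define q where "q y = (1-y^2)^2 / (4*t)" for y :: real
  define r where "r = - 1 / (4*t)"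
  define c where "c k = 4*A * real k^2 + (A+4*B) * real k + B" for k :: nat
  have "t < 0" using assms by (simp add: t_def algebra_simps)
  then have "0 \<le> r" "r < 1" using assms by (simp_all add: r_def t_def field_simps)
  have q_bound: "\<bar>q y\<bar> \<le> r" if "y \<in> {0..1}" for y
  proof -
    have "(1-y^2)^2 \<le> 1" using that by (auto simp: power_le_one)
    then show ?thesis
      using \<open>t < 0\<close> divide_right_mono_neg[of "(1-y^2)^2" 1 "4*t"] by (simp add: q_def r_def abs_div)
  qed
  show ?thesis
  proof (rule sums_integral_M_test)
    show "continuous_on {0..1} (\<lambda>y. c k * q y ^ k)" for k
      using \<open>t < 0\<close> by (auto simp: q_def intro!: continuous_intros)
    show "norm (c k * q y ^ k) \<le> \<bar>c k * r ^ k\<bar>" if "y \<in> {0..1}" for k y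
      using q_bound[OF that] \<open>0 \<le> r\<close> by (simp add: abs_mult power_abs mult_left_mono power_mono)
    show "summable (\<lambda>k. \<bar>c k * r ^ k\<bar>)"
      unfolding c_def using \<open>0 \<le> r\<close> \<open>r < 1\<close> by (intro summable_abs_quadratic_geometric) simp
    show "((\<lambda>y. c k * q y ^ k) has_integral
        ((2 * (2*x - 1)^2 * (2*x - 3) * real k - (4*x^3 - 16*x^2 + 7*x + 6)) * 4^k)
          / ((x * (1 - x))^k * real ((4*k) choose (2*k)))) {0..1}" for k
    proof -
      have "c k = (A * real k + B) * (4 * real k + 1)"
        by (simp add: c_def algebra_simps power2_eq_square)
      moreover have "2 * (2*x - 1)^2 * (2*x - 3) * real k - (4*x^3 - 16*x^2 + 7*x + 6) = A * real k + B"
        by (simp add: A_def B_def)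
      ultimately show ?thesis
        using has_integral_mult_right[OF has_integral_inverse_central_binomial[of k t], of "A * real k + B"]
        by (simp only: q_def t_def mult.assoc times_divide_eq_right)
    qed
    show "(\<lambda>k. c k * q y ^ k) sums quadratic_geometric_sum (4*A) (A+4*B) B (q y)" if "y \<in> {0..1}" for y
      unfolding c_def using q_bound[OF that] \<open>r < 1\<close> by (intro sums_quadratic_geometric) simp
    show "((\<lambda>y. quadratic_geometric_sum (4*A) (A+4*B) B (q y)) has_integral (1-x) * (3 * R x + 4*x*(x-3))) {0..1}"
      using has_integral_quadratic_geometric_sum[of x] \<open>t < 0\<close> unfolding A_def B_def q_def t_def by simp
  qed
qed

lemma four_x_one_minus_x_less:
  fixes x :: real
  assumes "x > (1 + sqrt 2) / 2 \<or> x < (1 - sqrt 2) / 2"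
  shows "4*x*(1-x) < -1"
proof -
  have "sqrt 2 < \<bar>2*x - 1\<bar>" using assms by auto
  then have "sqrt 2 < sqrt ((2*x - 1)^2)" by simp
  then have "2 < (2*x - 1)^2" by (simp only: real_sqrt_less_iff)
  moreover have "4*x*(1-x) = 1 - (2*x - 1)^2" by algebra
  ultimately show ?thesis by simp
qed

lemma sums_R_series_reflected:
  fixes x :: real
  assumes "4*x*(1-x) < -1"
  shows "(\<lambda>k. ((2 * (2*x - 1)^2 * (2*x + 1) * real k - (4*x^3 + 4*x^2 - 13*x - 1)) * 4^k)
            / ((x * (1 - x))^k * real ((4*k) choose (2*k))))
     sums (- x * (3 * R (1 - x) + 4 * (x - 1) * (x + 2)))"
proof -
  have "4*(1-x)*(1-(1-x)) < -1" using assms by (simp add: algebra_simps)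
  note sums_minus[OF sums_R_series[OF this]]
  moreover have "- (((2 * (2*(1-x) - 1)^2 * (2*(1-x) - 3) * real k - (4*(1-x)^3 - 16*(1-x)^2 + 7*(1-x) + 6)) * 4^k)
      / (((1-x) * (1 - (1-x)))^k * real ((4*k) choose (2*k))))
    = ((2 * (2*x - 1)^2 * (2*x + 1) * real k - (4*x^3 + 4*x^2 - 13*x - 1)) * 4^k)
      / ((x * (1 - x))^k * real ((4*k) choose (2*k)))" for k
  proof -
    have "- (2 * (2*(1-x) - 1)^2 * (2*(1-x) - 3) * real k - (4*(1-x)^3 - 16*(1-x)^2 + 7*(1-x) + 6))
        = 2 * (2*x - 1)^2 * (2*x + 1) * real k - (4*x^3 + 4*x^2 - 13*x - 1)"
      by algebra
    moreover have "(1-x) * (1 - (1-x)) = x * (1-x)" by simp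
    ultimately show ?thesis by (simp only: minus_divide_left mult_minus_left[symmetric])
  qed
  moreover have "- ((1 - (1-x)) * (3 * R (1-x) + 4 * (1-x) * ((1-x) - 3)))
      = - x * (3 * R (1 - x) + 4 * (x - 1) * (x + 2))"
    by algebra
  ultimately show ?thesis by (simp only:)
qed

theorem theorem1p3:
  fixes x :: real
  assumes "x > (1 + sqrt 2) / 2 \<or> x < (1 - sqrt 2) / 2"
  shows "((\<lambda>k. ((2 * (2*x - 1)^2 * (2*x - 3) * real k - (4*x^3 - 16*x^2 + 7*x + 6)) * 4^k)
            / ((x * (1 - x))^k * real ((4*k) choose (2*k))))
           sums ((1 - x) * (3 * R x + 4 * x * (x - 3)))) \<and>
         ((\<lambda>k. ((2 * (2*x - 1)^2 * (2*x + 1) * real k - (4*x^3 + 4*x^2 - 13*x - 1)) * 4^k)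
            / ((x * (1 - x))^k * real ((4*k) choose (2*k))))
           sums (- x * (3 * R (1 - x) + 4 * (x - 1) * (x + 2))))"
  by (intro conjI sums_R_series sums_R_series_reflected four_x_one_minus_x_less[OF assms])

end
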